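(* As formal power series in $y$, \[ \sum_{n\ge0}D_n(x)y^n=\frac{(1-xy+y)(1+x^2y^2)}{(1-xy)(1-xy^2)-xy^3}+(2x-1)y . \]
   Context: For $n\ge1$ let $\Xi_n$ be the poset on $\{x_1,\dots,x_n\}$ whose cover relations are exactly: $x_2\prec x_1$, $x_3\prec x_2$, and for $3\le i\le n-1$, $x_i\prec x_{i+1}$ if $i$ is odd and $x_{i+1}\prec x_i$ if $i$ is even (so $x_1>x_2>x_3<x_4>x_5<\cdots$). A filter of a poset is an up-closed subset. The matchable Lucas cube $\Omega_n$ is the graph whose vertices are the filters of $\Xi_n$, two filters adjacent iff one is obtained from the other by deleting a single element; $\Omega_0$ is the one-vertex graph. $d_{n,k}$ is the number of vertices of degree $k$ in $\Omega_n$ and $D_n(x)=\sum_{k\ge0}d_{n,k}x^k$ is the degree sequence polynomial. *)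

theory Defs
  imports "HOL-Computational_Algebra.Computational_Algebra"
begin

text \<open>Elements of the poset Xi_n are the indices 1..n (index i stands for x_i).
  xi_cover n a b means x_a is covered by x_b, i.e. x_a \<prec> x_b.\<close>
definition xi_cover :: "nat \<Rightarrow> nat \<Rightarrow> nat \<Rightarrow> bool" where
  "xi_cover n a b \<longleftrightarrow> a \<in> {1..n} \<and> b \<in> {1..n} \<and>
     ((a = 2 \<and> b = 1) \<or> (a = 3 \<and> b = 2) \<or>
      (\<exists>i. 3 \<le> i \<and> i \<le> n - 1 \<and>
         ((odd i \<and> a = i \<and> b = i + 1) \<or> (even i \<and> a = i + 1 \<and> b = i))))"

definition xi_le :: "nat \<Rightarrow> nat \<Rightarrow> nat \<Rightarrow> bool" where
  "xi_le n = (xi_cover n)\<^sup>*\<^sup>*"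

definition xi_filters :: "nat \<Rightarrow> nat set set" where
  "xi_filters n = {F. F \<subseteq> {1..n} \<and> (\<forall>a\<in>F. \<forall>b\<in>{1..n}. xi_le n a b \<longrightarrow> b \<in> F)}"

definition omega_adj :: "nat set \<Rightarrow> nat set \<Rightarrow> bool" where
  "omega_adj F G \<longleftrightarrow> (\<exists>a\<in>F. G = F - {a}) \<or> (\<exists>a\<in>G. F = G - {a})"

definition omega_deg :: "nat \<Rightarrow> nat set \<Rightarrow> nat" where
  "omega_deg n F = card {G \<in> xi_filters n. omega_adj F G}"

definition d_count :: "nat \<Rightarrow> nat \<Rightarrow> nat" where
  "d_count n k = card {F \<in> xi_filters n. omega_deg n F = k}"

text \<open>Degree sequence polynomial D_n(x) = sum_k d_{n,k} x^k (the sum is finite: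
  degrees are bounded by the number of vertices).\<close>
definition D_poly :: "nat \<Rightarrow> real poly" where
  "D_poly n = (\<Sum>k\<le>card (xi_filters n). monom (of_nat (d_count n k)) k)"

end

theory Submission
  imports Defs
begin

text \<open>The degree of a filter F in Omega_n is the number of elements x_a whose membership can be
  toggled without leaving the set of filters. For 3 \<le> a < n this depends only on which of
  x_(a-1), x_a, x_(a+1) lie in F. Grouping the filters of Xi_n by the membership of x_(n-1) and
  x_n therefore gives four weighted sums that obey a linear transfer recursion in n, and eliminating
  them yields D_(n+3) = x D_(n+2) + x D_(n+1) + (x - x^2) D_n for n \<ge> 2. Hence the series times the
  denominator 1 - xy - xy^2 - (x - x^2) y^3 is a polynomial of degree at most 4, which the initial
  values D_0, ..., D_4 identify.\<close>

section \<open>The poset and its filters\<close>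

definition xi_cov :: "nat \<Rightarrow> nat \<Rightarrow> bool" where
  "xi_cov a b \<longleftrightarrow> (a = 2 \<and> b = 1) \<or> (a = 3 \<and> b = 2) \<or> (3 \<le> a \<and> odd a \<and> b = Suc a)
     \<or> (4 \<le> b \<and> even b \<and> a = Suc b)"

lemma xi_cov_irrefl: "\<not> xi_cov a a"
  by (auto simp: xi_cov_def)

lemma xi_cov_right:
  "3 \<le> a \<Longrightarrow> xi_cov c a \<longleftrightarrow> even a \<and> (c = a - 1 \<or> c = Suc a)"
  unfolding xi_cov_def by (cases a) (auto, presburger+)

lemma xi_cov_left:
  "3 \<le> a \<Longrightarrow> xi_cov a d \<longleftrightarrow> odd a \<and> (d = a - 1 \<or> d = Suc a)"
  unfolding xi_cov_def by (auto, presburger+)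

lemma xi_cover_iff: "xi_cover n a b \<longleftrightarrow> a \<le> n \<and> b \<le> n \<and> xi_cov a b"
proof
  assume "xi_cover n a b"
  then show "a \<le> n \<and> b \<le> n \<and> xi_cov a b"
    unfolding xi_cover_def xi_cov_def by auto
next
  assume h: "a \<le> n \<and> b \<le> n \<and> xi_cov a b"
  then consider "a = 2 \<and> b = 1" | "a = 3 \<and> b = 2" | "3 \<le> a \<and> odd a \<and> b = Suc a"
     | "4 \<le> b \<and> even b \<and> a = Suc b" unfolding xi_cov_def by blast
  then show "xi_cover n a b"
  proof cases
    case 3 then show ?thesis using h unfolding xi_cover_def
      by (intro conjI disjI2) (auto intro!: exI[of _ a])
  next
    case 4 then show ?thesis using h unfolding xi_cover_def
      by (intro conjI disjI2) (auto intro!: exI[of _ b])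
  qed (use h in \<open>auto simp: xi_cover_def\<close>)
qed

lemma xi_filters_eq:
  "xi_filters n = {F. F \<subseteq> {1..n} \<and> (\<forall>a\<in>F. \<forall>b. b \<le> n \<and> xi_cov a b \<longrightarrow> b \<in> F)}"
proof (intro set_eqI iffI)
  fix F assume F: "F \<in> xi_filters n"
  have "xi_le n a b" if "a \<le> n" "b \<le> n" "xi_cov a b" for a b
    using that unfolding xi_le_def by (simp add: xi_cover_iff r_into_rtranclp)
  moreover have "1 \<le> b" if "xi_cov a b" for a b
    using that unfolding xi_cov_def by auto
  ultimately show "F \<in> {F. F \<subseteq> {1..n} \<and> (\<forall>a\<in>F. \<forall>b. b \<le> n \<and> xi_cov a b \<longrightarrow> b \<in> F)}"
    using F unfolding xi_filters_def by auto
next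
  fix F assume F: "F \<in> {F. F \<subseteq> {1..n} \<and> (\<forall>a\<in>F. \<forall>b. b \<le> n \<and> xi_cov a b \<longrightarrow> b \<in> F)}"
  have "b \<in> F" if "xi_le n a b" "a \<in> F" for a b
    using that unfolding xi_le_def
    by (induction rule: rtranclp_induct) (use F in \<open>auto simp: xi_cover_iff\<close>)
  then show "F \<in> xi_filters n" using F unfolding xi_filters_def by auto
qed

lemma finite_xi_filters: "finite (xi_filters n)"
  by (rule finite_subset[of _ "Pow {1..n}"]) (auto simp: xi_filters_eq)

lemma xi_filters_subset: "F \<in> xi_filters n \<Longrightarrow> F \<subseteq> {1..n}"
  by (simp add: xi_filters_eq)

lemma xi_filters_closed:
  "F \<in> xi_filters n \<Longrightarrow> a \<in> F \<Longrightarrow> b \<le> n \<Longrightarrow> xi_cov a b \<Longrightarrow> b \<in> F"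
  unfolding xi_filters_eq by blast

lemma Diff_in_xi_filters_iff:
  assumes F: "F \<in> xi_filters n" and a: "a \<in> F"
  shows "F - {a} \<in> xi_filters n \<longleftrightarrow> (\<forall>c\<in>F. \<not> xi_cov c a)"
proof
  assume del: "F - {a} \<in> xi_filters n"
  show "\<forall>c\<in>F. \<not> xi_cov c a"
  proof (intro ballI notI)
    fix c assume c: "c \<in> F" "xi_cov c a"
    then have "c \<noteq> a" using xi_cov_irrefl by blast
    moreover have "a \<le> n" using F a by (auto simp: xi_filters_eq)
    ultimately show False using del c unfolding xi_filters_eq by blast
  qed
next
  assume "\<forall>c\<in>F. \<not> xi_cov c a"
  then show "F - {a} \<in> xi_filters n" using F unfolding xi_filters_eq by blast
qed

lemma insert_in_xi_filters_iff:
  assumes F: "F \<in> xi_filters n" and a: "a \<in> {1..n}"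
  shows "insert a F \<in> xi_filters n \<longleftrightarrow> (\<forall>d. d \<le> n \<and> xi_cov a d \<longrightarrow> d \<in> F)"
  using F a xi_cov_irrefl unfolding xi_filters_eq by auto

section \<open>Degrees as sums of local contributions\<close>

definition flippable :: "nat \<Rightarrow> nat set \<Rightarrow> nat \<Rightarrow> bool" where
  "flippable n F a \<longleftrightarrow>
     (if a \<in> F then \<forall>c\<in>F. \<not> xi_cov c a else \<forall>d. d \<le> n \<and> xi_cov a d \<longrightarrow> d \<in> F)"

lemma flippable_iff:
  assumes F: "F \<in> xi_filters n" and a: "a \<in> {1..n}"
  shows "flippable n F a \<longleftrightarrow> (if a \<in> F then F - {a} else insert a F) \<in> xi_filters n"
  using Diff_in_xi_filters_iff[OF F] insert_in_xi_filters_iff[OF F a]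
  by (simp add: flippable_def)

lemma omega_deg_eq_card:
  assumes F: "F \<in> xi_filters n"
  shows "omega_deg n F = card {a \<in> {1..n}. flippable n F a}"
proof -
  define flip where "flip a = (if a \<in> F then F - {a} else insert a F)" for a
  have flip_iff: "a \<in> {1..n} \<Longrightarrow> flippable n F a \<longleftrightarrow> flip a \<in> xi_filters n" for a
    using flippable_iff[OF F] by (simp add: flip_def)
  have mem_flip: "c \<in> flip a \<longleftrightarrow> (c \<in> F \<longleftrightarrow> c \<noteq> a)" for a c
    by (auto simp: flip_def)
  have inj: "inj flip"
  proof (rule injI)
    fix a b assume "flip a = flip b"
    then have "a \<in> flip a \<longleftrightarrow> a \<in> flip b" by simp
    then show "a = b" unfolding mem_flip by blast
  qed
  have "{G \<in> xi_filters n. omega_adj F G} = flip ` {a \<in> {1..n}. flippable n F a}"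
  proof (intro set_eqI iffI)
    fix G assume G: "G \<in> {G \<in> xi_filters n. omega_adj F G}"
    then have GF: "G \<in> xi_filters n" by simp
    from G consider a where "a \<in> F" "G = F - {a}" | a where "a \<in> G" "F = G - {a}"
      unfolding omega_adj_def by blast
    then obtain a where "G = flip a" "a \<in> {1..n}"
    proof cases
      case 1 then show thesis using that[of a] xi_filters_subset[OF F] by (auto simp: flip_def)
    next
      case 2
      then have "a \<notin> F" "G = insert a F" by auto
      then show thesis using that[of a] xi_filters_subset[OF GF] by (auto simp: flip_def)
    qed
    with GF show "G \<in> flip ` {a \<in> {1..n}. flippable n F a}"
      using flip_iff by blast
  next
    fix G assume "G \<in> flip ` {a \<in> {1..n}. flippable n F a}"
    then obtain a where "a \<in> {1..n}" "flippable n F a" "G = flip a" by blast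
    then show "G \<in> {G \<in> xi_filters n. omega_adj F G}"
      using flip_iff unfolding omega_adj_def flip_def by auto
  qed
  then show ?thesis
    unfolding omega_deg_def using inj by (simp add: card_image inj_on_subset)
qed

lemma poly_D_poly: "poly (D_poly n) x = (\<Sum>F\<in>xi_filters n. x ^ omega_deg n F)"
proof -
  let ?N = "card (xi_filters n)"
  have deg_le: "omega_deg n F \<le> ?N" for F
    unfolding omega_deg_def by (rule card_mono[OF finite_xi_filters]) auto
  have "poly (D_poly n) x = (\<Sum>k\<le>?N. of_nat (d_count n k) * x ^ k)"
    by (simp add: D_poly_def poly_sum poly_monom)
  also have "\<dots> = (\<Sum>k\<le>?N. \<Sum>F\<in>{F \<in> xi_filters n. omega_deg n F = k}. x ^ omega_deg n F)"
    by (simp add: d_count_def)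
  also have "\<dots> = (\<Sum>F\<in>xi_filters n. x ^ omega_deg n F)"
    by (rule sum.group[OF finite_xi_filters]) (use deg_le in auto)
  finally show ?thesis .
qed

text \<open>u, v, w record whether a - 1, a, a + 1 lie in F; for odd a the element x_a lies below both
  neighbours, for even a above them.\<close>
definition local_flippable :: "nat \<Rightarrow> bool \<Rightarrow> bool \<Rightarrow> bool \<Rightarrow> bool" where
  "local_flippable a u v w \<longleftrightarrow> (if odd a then v \<or> u \<and> w else v \<longrightarrow> \<not> u \<and> \<not> w)"

lemma flippable_1: "flippable n F 1 \<longleftrightarrow> (1 \<in> F \<longrightarrow> 2 \<notin> F)"
  by (auto simp: flippable_def xi_cov_def)

lemma flippable_2: "2 \<le> n \<Longrightarrow> flippable n F 2 \<longleftrightarrow> (if 2 \<in> F then 3 \<notin> F else 1 \<in> F)"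
  by (auto simp: flippable_def xi_cov_def)

lemma flippable_middle:
  "3 \<le> a \<Longrightarrow> a < n \<Longrightarrow>
    flippable n F a \<longleftrightarrow> local_flippable a (a - 1 \<in> F) (a \<in> F) (Suc a \<in> F)"
  by (auto simp: flippable_def local_flippable_def xi_cov_right xi_cov_left)

text \<open>The missing neighbour x_(n+1) is replaced by the value that makes its constraint vacuous.\<close>
lemma flippable_last:
  "3 \<le> n \<Longrightarrow> Suc n \<notin> F \<Longrightarrow>
    flippable n F n \<longleftrightarrow> local_flippable n (n - 1 \<in> F) (n \<in> F) (odd n)"
  by (auto simp: flippable_def local_flippable_def xi_cov_right xi_cov_left)

text \<open>The contribution of x_1, ..., x_(n-1) to the degree; unlike that of x_n, it does not change
  when F is extended to a filter of Xi_(n+1).\<close>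
definition inner_deg :: "nat \<Rightarrow> nat set \<Rightarrow> nat" where
  "inner_deg n F = card {a \<in> {1..<n}. flippable n F a}"

lemma card_filter_atLeastLessThan_Suc:
  assumes "1 \<le> n"
  shows "card {a \<in> {1..<Suc n}. P a} = card {a \<in> {1..<n}. P a} + of_bool (P n)"
proof (cases "P n")
  case True
  then have "{a \<in> {1..<Suc n}. P a} = insert n {a \<in> {1..<n}. P a}" using assms by auto
  then show ?thesis using True by simp
next
  case False
  then have "{a \<in> {1..<Suc n}. P a} = {a \<in> {1..<n}. P a}" by (auto simp: less_Suc_eq)
  then show ?thesis using False by simp
qed

lemma omega_deg_eq_inner_deg:
  assumes "F \<in> xi_filters n" "1 \<le> n"
  shows "omega_deg n F = inner_deg n F + of_bool (flippable n F n)"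
proof -
  have "{1..n} = {1..<Suc n}" by auto
  then show ?thesis
    using omega_deg_eq_card[OF assms(1)] card_filter_atLeastLessThan_Suc[OF assms(2)]
    by (simp add: inner_deg_def)
qed

lemma inner_deg_Suc:
  assumes n: "3 \<le> n"
  shows "inner_deg (Suc n) F =
    inner_deg n (F - {Suc n}) + of_bool (local_flippable n (n - 1 \<in> F) (n \<in> F) (Suc n \<in> F))"
proof -
  have "flippable (Suc n) F a \<longleftrightarrow> flippable n (F - {Suc n}) a" if a: "a \<in> {1..<n}" for a
  proof -
    consider "a = 1" | "a = 2" | "3 \<le> a" using a by force
    then show ?thesis
    proof cases
      case 3
      moreover have "a - 1 \<noteq> Suc n" using a by auto
      ultimately show ?thesis using a flippable_middle[OF 3] by auto
    qed (use n flippable_1[of "Suc n" F] flippable_1[of n "F - {Suc n}"]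
          flippable_2[of "Suc n" F] flippable_2[of n "F - {Suc n}"] in simp_all)
  qed
  then have "{a \<in> {1..<n}. flippable (Suc n) F a} = {a \<in> {1..<n}. flippable n (F - {Suc n}) a}"
    by blast
  then show ?thesis
    using card_filter_atLeastLessThan_Suc[of n "flippable (Suc n) F"] n flippable_middle[OF n]
    by (simp add: inner_deg_def)
qed

section \<open>The transfer recursion\<close>

definition last_step_ok :: "nat \<Rightarrow> bool \<Rightarrow> bool \<Rightarrow> bool" where
  "last_step_ok n v w \<longleftrightarrow> (if odd n then v \<longrightarrow> w else w \<longrightarrow> v)"

lemma xi_cov_Suc_cases:
  assumes "3 \<le> n" "a \<le> Suc n" "b \<le> Suc n" "xi_cov a b"
  shows "a \<le> n \<and> b \<le> n \<or> odd n \<and> a = n \<and> b = Suc n \<or> even n \<and> a = Suc n \<and> b = n"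
  using assms unfolding xi_cov_def by (auto simp: le_Suc_eq)

lemma mem_xi_filters_Suc:
  assumes n: "3 \<le> n"
  shows "F \<in> xi_filters (Suc n) \<longleftrightarrow>
    F \<subseteq> {1..Suc n} \<and> F - {Suc n} \<in> xi_filters n \<and> last_step_ok n (n \<in> F) (Suc n \<in> F)"
    (is "_ \<longleftrightarrow> ?sub \<and> ?restr \<and> ?ok")
proof
  assume F: "F \<in> xi_filters (Suc n)"
  then have sub: ?sub by (rule xi_filters_subset)
  have closed: "b \<in> F" if "a \<in> F" "b \<le> Suc n" "xi_cov a b" for a b
    using F that by (rule xi_filters_closed)
  have ?restr
    unfolding xi_filters_eq using sub closed by auto
  moreover have ?ok
    using closed[of n "Suc n"] closed[of "Suc n" n] xi_cov_left[OF n] xi_cov_right[OF n]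
    unfolding last_step_ok_def by simp
  ultimately show "?sub \<and> ?restr \<and> ?ok" using sub by blast
next
  assume F: "?sub \<and> ?restr \<and> ?ok"
  have "b \<in> F" if "a \<in> F" "b \<le> Suc n" "xi_cov a b" for a b
  proof -
    have "a \<le> Suc n" using F that(1) by auto
    with xi_cov_Suc_cases[OF n _ that(2,3)]
    consider "a \<le> n" "b \<le> n" | "odd n" "a = n" "b = Suc n" | "even n" "a = Suc n" "b = n"
      by blast
    then show ?thesis
    proof cases
      case 1
      have "a \<in> F - {Suc n}" using 1(1) that(1) by simp
      moreover have "F - {Suc n} \<in> xi_filters n" using F by blast
      ultimately show ?thesis using xi_filters_closed 1(2) that(3) by blast
    next
      case 2
      then have "n \<in> F" "odd n" using that(1) by simp_all
      with F show ?thesis using 2 unfolding last_step_ok_def by simp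
    next
      case 3
      then have "Suc n \<in> F" "even n" using that(1) by simp_all
      with F show ?thesis using 3 unfolding last_step_ok_def by simp
    qed
  qed
  then show "F \<in> xi_filters (Suc n)" using F unfolding xi_filters_eq by blast
qed

lemma xi_filters_Suc:
  assumes n: "3 \<le> n"
  shows "xi_filters (Suc n) = {G \<in> xi_filters n. last_step_ok n (n \<in> G) False} \<union>
     insert (Suc n) ` {G \<in> xi_filters n. last_step_ok n (n \<in> G) True}"
proof (intro set_eqI iffI)
  fix F assume F: "F \<in> xi_filters (Suc n)"
  show "F \<in> {G \<in> xi_filters n. last_step_ok n (n \<in> G) False} \<union>
     insert (Suc n) ` {G \<in> xi_filters n. last_step_ok n (n \<in> G) True}"
  proof (cases "Suc n \<in> F")
    case True
    then have "F = insert (Suc n) (F - {Suc n})" by blast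
    moreover have "F - {Suc n} \<in> {G \<in> xi_filters n. last_step_ok n (n \<in> G) True}"
      using F True unfolding mem_xi_filters_Suc[OF n] by simp
    ultimately show ?thesis by blast
  next
    case False
    then show ?thesis using F unfolding mem_xi_filters_Suc[OF n] by auto
  qed
next
  fix F assume "F \<in> {G \<in> xi_filters n. last_step_ok n (n \<in> G) False} \<union>
     insert (Suc n) ` {G \<in> xi_filters n. last_step_ok n (n \<in> G) True}"
  then consider "F \<in> xi_filters n" "last_step_ok n (n \<in> F) False"
    | G where "G \<in> xi_filters n" "last_step_ok n (n \<in> G) True" "F = insert (Suc n) G"
    by blast
  then show "F \<in> xi_filters (Suc n)"
  proof cases
    case 1
    have sub: "F \<subseteq> {1..n}" using 1 by (intro xi_filters_subset)
    then have "Suc n \<notin> F" by auto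
    with 1 sub show ?thesis unfolding mem_xi_filters_Suc[OF n] by auto
  next
    case 2
    have sub: "G \<subseteq> {1..n}" using 2 by (intro xi_filters_subset)
    then have "Suc n \<notin> G" by auto
    with 2 sub show ?thesis unfolding mem_xi_filters_Suc[OF n] by auto
  qed
qed

lemma sum_xi_filters_Suc:
  assumes n: "3 \<le> n"
  shows "(\<Sum>F\<in>xi_filters (Suc n). h F) =
    (\<Sum>G\<in>xi_filters n. (if last_step_ok n (n \<in> G) False then h G else 0) +
                       (if last_step_ok n (n \<in> G) True then h (insert (Suc n) G) else 0))"
proof -
  have notin: "Suc n \<notin> G" if "G \<in> xi_filters n" for G
    using xi_filters_subset[OF that] by auto
  have "inj_on (insert (Suc n)) (xi_filters n)"
    by (rule inj_onI) (metis notin Diff_insert_absorb)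
  then have inj: "inj_on (insert (Suc n)) {G \<in> xi_filters n. last_step_ok n (n \<in> G) True}"
    by (rule inj_on_subset) blast
  have disj: "{G \<in> xi_filters n. last_step_ok n (n \<in> G) False} \<inter>
     insert (Suc n) ` {G \<in> xi_filters n. last_step_ok n (n \<in> G) True} = {}"
    using notin by auto
  show ?thesis
    unfolding xi_filters_Suc[OF n] sum.distrib
    by (subst sum.union_disjoint)
       (use disj inj in \<open>auto simp: sum.reindex sum.inter_filter finite_xi_filters\<close>)
qed

definition end_weight :: "real \<Rightarrow> nat \<Rightarrow> bool \<Rightarrow> bool \<Rightarrow> real" where
  "end_weight x n u v =
     (\<Sum>F\<in>xi_filters n. if (n - 1 \<in> F \<longleftrightarrow> u) \<and> (n \<in> F \<longleftrightarrow> v) then x ^ inner_deg n F else 0)"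

lemma sum_by_end_weight:
  "(\<Sum>F\<in>xi_filters n. x ^ inner_deg n F * \<phi> (n - 1 \<in> F) (n \<in> F)) =
    end_weight x n True True * \<phi> True True + end_weight x n True False * \<phi> True False +
    end_weight x n False True * \<phi> False True + end_weight x n False False * \<phi> False False"
  unfolding end_weight_def sum_distrib_right sum.distrib[symmetric]
  by (rule sum.cong[OF refl]) auto

text \<open>The factor with which a filter of Xi_n whose last two elements are in state (u, v') enters the
  weight of state (v, w) of Xi_(n+1).\<close>
definition transfer :: "real \<Rightarrow> nat \<Rightarrow> bool \<Rightarrow> bool \<Rightarrow> bool \<Rightarrow> bool \<Rightarrow> real" where
  "transfer x n v w u v' =
     (if (v' \<longleftrightarrow> v) \<and> last_step_ok n v w then x ^ of_bool (local_flippable n u v w) else 0)"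

lemma end_weight_Suc_sum:
  assumes n: "3 \<le> n"
  shows "end_weight x (Suc n) v w =
    (\<Sum>G\<in>xi_filters n. x ^ inner_deg n G * transfer x n v w (n - 1 \<in> G) (n \<in> G))"
proof -
  define h where
    "h F = (if (n \<in> F \<longleftrightarrow> v) \<and> (Suc n \<in> F \<longleftrightarrow> w) then x ^ inner_deg (Suc n) F else 0)" for F
  have "end_weight x (Suc n) v w = (\<Sum>F\<in>xi_filters (Suc n). h F)"
    unfolding end_weight_def h_def by simp
  also have "\<dots> = (\<Sum>G\<in>xi_filters n. (if last_step_ok n (n \<in> G) False then h G else 0) +
                       (if last_step_ok n (n \<in> G) True then h (insert (Suc n) G) else 0))"
    by (rule sum_xi_filters_Suc[OF n])
  also have "\<dots> = (\<Sum>G\<in>xi_filters n. x ^ inner_deg n G * transfer x n v w (n - 1 \<in> G) (n \<in> G))"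
  proof (rule sum.cong[OF refl])
    fix G assume "G \<in> xi_filters n"
    then have "Suc n \<notin> G" using xi_filters_subset by fastforce
    have "n - 1 \<noteq> Suc n" by simp
    have "inner_deg (Suc n) G =
        inner_deg n G + of_bool (local_flippable n (n - 1 \<in> G) (n \<in> G) False)"
      and "inner_deg (Suc n) (insert (Suc n) G) =
        inner_deg n G + of_bool (local_flippable n (n - 1 \<in> G) (n \<in> G) True)"
      using inner_deg_Suc[OF n, of G] inner_deg_Suc[OF n, of "insert (Suc n) G"]
        \<open>n - 1 \<noteq> Suc n\<close> \<open>Suc n \<notin> G\<close>
      by (simp_all add: insert_Diff_if)
    with \<open>Suc n \<notin> G\<close> show "(if last_step_ok n (n \<in> G) False then h G else 0) +
        (if last_step_ok n (n \<in> G) True then h (insert (Suc n) G) else 0) =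
      x ^ inner_deg n G * transfer x n v w (n - 1 \<in> G) (n \<in> G)"
      unfolding h_def transfer_def by (cases w) (auto simp: power_add)
  qed
  finally show ?thesis .
qed

lemma end_weight_Suc:
  assumes n: "3 \<le> n"
  shows "end_weight x (Suc n) True True = (if odd n
      then x * end_weight x n True True + x * end_weight x n False True
      else end_weight x n True True + end_weight x n False True)" (is ?TT)
    and "end_weight x (Suc n) True False = (if odd n
      then 0
      else end_weight x n True True + x * end_weight x n False True)" (is ?TF)
    and "end_weight x (Suc n) False True = (if odd n
      then end_weight x n False False + x * end_weight x n True False
      else 0)" (is ?FT)
    and "end_weight x (Suc n) False False = (if odd n
      then end_weight x n False False + end_weight x n True False
      else x * end_weight x n True False + x * end_weight x n False False)" (is ?FF)
proof -
  have "end_weight x (Suc n) v w =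
      end_weight x n True True * transfer x n v w True True +
      end_weight x n True False * transfer x n v w True False +
      end_weight x n False True * transfer x n v w False True +
      end_weight x n False False * transfer x n v w False False" for v w
    unfolding end_weight_Suc_sum[OF n] by (rule sum_by_end_weight)
  then show ?TT ?TF ?FT ?FF
    unfolding transfer_def last_step_ok_def local_flippable_def by (auto simp: algebra_simps)
qed

lemma end_weight_eq_0:
  assumes n: "3 \<le> n"
  shows "if odd n then end_weight x n False True = 0 else end_weight x n True False = 0"
proof -
  have "if odd n then n \<in> F \<longrightarrow> n - 1 \<in> F else n - 1 \<in> F \<longrightarrow> n \<in> F"
    if F: "F \<in> xi_filters n" for F
  proof -
    show ?thesis
      using xi_filters_closed[OF F, of n "n - 1"] xi_filters_closed[OF F, of "n - 1" n]
        xi_cov_left[OF n] xi_cov_right[OF n]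
      by simp
  qed
  then show ?thesis unfolding end_weight_def by (auto intro!: sum.neutral)
qed

lemma poly_D_poly_eq_end_weight:
  assumes n: "3 \<le> n"
  shows "poly (D_poly n) x = (if odd n
    then x * end_weight x n True True + x * end_weight x n False True
       + x * end_weight x n True False + end_weight x n False False
    else end_weight x n True True + x * end_weight x n False True
       + x * end_weight x n True False + x * end_weight x n False False)"
    (is "_ = ?weights")
proof -
  have "poly (D_poly n) x = (\<Sum>F\<in>xi_filters n.
      x ^ inner_deg n F * x ^ of_bool (local_flippable n (n - 1 \<in> F) (n \<in> F) (odd n)))"
    unfolding poly_D_poly
  proof (rule sum.cong[OF refl])
    fix F assume F: "F \<in> xi_filters n"
    then have "Suc n \<notin> F" using xi_filters_subset by fastforce
    then show "x ^ omega_deg n F =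
        x ^ inner_deg n F * x ^ of_bool (local_flippable n (n - 1 \<in> F) (n \<in> F) (odd n))"
      using omega_deg_eq_inner_deg[OF F] flippable_last[OF n] n by (simp add: power_add)
  qed
  also have "\<dots> = ?weights"
    unfolding sum_by_end_weight[where \<phi> = "\<lambda>u v. x ^ of_bool (local_flippable n u v (odd n))"]
    unfolding local_flippable_def by (auto simp: algebra_simps)
  finally show ?thesis .
qed

lemma poly_D_poly_Suc_Suc_Suc:
  assumes n: "3 \<le> n"
  shows "poly (D_poly (Suc (Suc (Suc n)))) x =
    x * poly (D_poly (Suc (Suc n))) x + x * poly (D_poly (Suc n)) x + (x - x ^ 2) * poly (D_poly n) x"
proof -
  have n': "3 \<le> Suc n" "3 \<le> Suc (Suc n)" "3 \<le> Suc (Suc (Suc n))" using n by auto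
  note weights = end_weight_Suc[OF n, of x] end_weight_Suc[OF n'(1), of x]
    end_weight_Suc[OF n'(2), of x]
  note polys = poly_D_poly_eq_end_weight[OF n, of x] poly_D_poly_eq_end_weight[OF n'(1), of x]
    poly_D_poly_eq_end_weight[OF n'(2), of x] poly_D_poly_eq_end_weight[OF n'(3), of x]
  show ?thesis
    using weights polys end_weight_eq_0[OF n, of x]
    by (cases "odd n") (simp_all add: algebra_simps power2_eq_square)
qed

section \<open>Initial values and the recurrence\<close>

lemma xi_filters_0: "xi_filters 0 = {{}}"
  unfolding xi_filters_eq by auto

lemma xi_filters_1: "xi_filters 1 = {{}, {1}}"
  unfolding xi_filters_eq by (auto simp: xi_cov_def subset_singleton_iff)

lemma xi_filters_2: "xi_filters 2 = {{}, {1}, {1, 2}}"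
proof (intro set_eqI iffI)
  fix F assume F: "F \<in> xi_filters 2"
  have "F \<subseteq> {1, 2}" using xi_filters_subset[OF F] by auto
  moreover have "2 \<in> F \<Longrightarrow> 1 \<in> F"
    using xi_filters_closed[OF F, of 2 1] by (simp add: xi_cov_def)
  ultimately show "F \<in> {{}, {1}, {1, 2}}"
    by (cases "1 \<in> F"; cases "2 \<in> F") auto
qed (auto simp: xi_filters_eq xi_cov_def)

lemma xi_filters_3: "xi_filters 3 = {{}, {1}, {1, 2}, {1, 2, 3}}"
proof (intro set_eqI iffI)
  fix F assume F: "F \<in> xi_filters 3"
  have "F \<subseteq> {1, 2, 3}" using xi_filters_subset[OF F] by auto
  moreover have "2 \<in> F \<Longrightarrow> 1 \<in> F" "3 \<in> F \<Longrightarrow> 2 \<in> F"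
    using xi_filters_closed[OF F, of 2 1] xi_filters_closed[OF F, of 3 2] by (simp_all add: xi_cov_def)
  ultimately show "F \<in> {{}, {1}, {1, 2}, {1, 2, 3}}"
    by (cases "1 \<in> F"; cases "2 \<in> F"; cases "3 \<in> F") auto
qed (auto simp: xi_filters_eq xi_cov_def)

lemma poly_D_poly_eq_sum_flippable:
  "poly (D_poly n) x = (\<Sum>F\<in>xi_filters n. x ^ (\<Sum>a\<in>{1..n}. of_bool (flippable n F a)))"
  unfolding poly_D_poly by (rule sum.cong) (simp_all add: omega_deg_eq_card Int_def)

lemma poly_D_poly_0: "poly (D_poly 0) x = 1"
  by (simp add: poly_D_poly_eq_sum_flippable xi_filters_0)

lemma poly_D_poly_1: "poly (D_poly 1) x = 2 * x"
  unfolding poly_D_poly_eq_sum_flippable xi_filters_1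
  by (simp add: flippable_def xi_cov_def del: sum_of_bool_eq)

lemma poly_D_poly_2: "poly (D_poly 2) x = 2 * x + x ^ 2"
proof -
  have "{1..2::nat} = {1, 2}" by auto
  then show ?thesis unfolding poly_D_poly_eq_sum_flippable xi_filters_2
    by (simp add: flippable_1[simplified] flippable_2 power2_eq_square del: sum_of_bool_eq)
qed

lemma inner_deg_3: "inner_deg 3 F = of_bool (flippable 3 F 1) + of_bool (flippable 3 F 2)"
  using card_filter_atLeastLessThan_Suc[of 2 "flippable 3 F"]
    card_filter_atLeastLessThan_Suc[of 1 "flippable 3 F"]
  by (simp add: inner_deg_def numeral_eq_Suc)

lemma end_weight_3:
  "end_weight x 3 True True = 1" "end_weight x 3 True False = x"
  "end_weight x 3 False True = 0" "end_weight x 3 False False = x + x ^ 2"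
proof -
  have "{1, 2} \<noteq> {1, 2, 3::nat}" by auto
  then show "end_weight x 3 True True = 1" "end_weight x 3 True False = x"
    "end_weight x 3 False True = 0" "end_weight x 3 False False = x + x ^ 2"
    by (simp_all add: end_weight_def xi_filters_3 inner_deg_3 flippable_1[simplified] flippable_2
        power2_eq_square)
qed

lemma poly_D_poly_3: "poly (D_poly 3) x = 2 * x + 2 * x ^ 2"
  using poly_D_poly_eq_end_weight[of 3 x] by (simp add: end_weight_3 power2_eq_square)

lemma poly_D_poly_4: "poly (D_poly 4) x = x + 3 * x ^ 2 + 3 * x ^ 3"
proof -
  have "poly (D_poly (Suc 3)) x = x + 3 * x ^ 2 + 3 * x ^ 3"
    using poly_D_poly_eq_end_weight[of "Suc 3" x] end_weight_Suc[of 3 x]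
    by (simp add: end_weight_3 power2_eq_square power3_eq_cube algebra_simps)
  then show ?thesis by simp
qed

lemma poly_D_poly_5: "poly (D_poly 5) x = 5 * x ^ 2 + 4 * x ^ 3 + 2 * x ^ 4"
proof -
  have "poly (D_poly (Suc (Suc 3))) x = 5 * x ^ 2 + 4 * x ^ 3 + 2 * x ^ 4"
    using poly_D_poly_eq_end_weight[of "Suc (Suc 3)" x] end_weight_Suc[of 3 x]
      end_weight_Suc[of "Suc 3" x]
    by (simp add: end_weight_3 power2_eq_square power3_eq_cube power4_eq_xxxx algebra_simps)
  then show ?thesis by (simp add: numeral_eq_Suc)
qed

lemma poly_D_poly_recurrence:
  assumes "5 \<le> n"
  shows "poly (D_poly n) x = x * poly (D_poly (n - 1)) x + x * poly (D_poly (n - 2)) x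
    + (x - x ^ 2) * poly (D_poly (n - 3)) x"
proof (cases "n = 5")
  case True
  have "poly (D_poly 5) x =
      x * poly (D_poly 4) x + x * poly (D_poly 3) x + (x - x ^ 2) * poly (D_poly 2) x"
    unfolding poly_D_poly_2 poly_D_poly_3 poly_D_poly_4 poly_D_poly_5 by algebra
  with True show ?thesis by simp
next
  case False
  define m where "m = n - 3"
  with False assms have "n = Suc (Suc (Suc m))" "3 \<le> m" by auto
  then show ?thesis using poly_D_poly_Suc_Suc_Suc[of m x] by simp
qed

section \<open>The generating function\<close>

lemma fps_times_cubic_nth:
  fixes f :: "'a::comm_ring_1 fps"
  shows "(f * (1 - fps_const a * fps_X - fps_const b * fps_X ^ 2 - fps_const c * fps_X ^ 3)) $ n =
    f $ n - (if n < 1 then 0 else a * f $ (n - 1)) - (if n < 2 then 0 else b * f $ (n - 2))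
      - (if n < 3 then 0 else c * f $ (n - 3))"
proof -
  have "f * (1 - fps_const a * fps_X - fps_const b * fps_X ^ 2 - fps_const c * fps_X ^ 3) =
      f - fps_const a * (f * fps_X ^ 1) - fps_const b * (f * fps_X ^ 2) - fps_const c * (f * fps_X ^ 3)"
    by (simp add: algebra_simps)
  then show ?thesis by (simp only: fps_sub_nth fps_mult_left_const_nth fps_X_power_mult_right_nth) simp
qed

lemma fps_eq_divide_add:
  fixes A B P Q :: "'a::field fps"
  assumes Q: "Q $ 0 \<noteq> 0" and eq: "(A - B) * Q = P"
  shows "A = P / Q + B"
proof -
  have "A = (A - B) * (Q * inverse Q) + B" using inverse_mult_eq_1'[OF Q] by simp
  also have "\<dots> = P / Q + B" unfolding mult.assoc[symmetric] eq fps_divide_unit[OF Q] ..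
  finally show ?thesis .
qed

lemma D_fps_times_denominator:
  fixes x :: real
  shows "(Abs_fps (\<lambda>n. poly (D_poly n) x) - fps_const (2 * x - 1) * fps_X) *
      (1 - fps_const x * fps_X - fps_const x * fps_X ^ 2 - fps_const (x - x ^ 2) * fps_X ^ 3) =
    1 + fps_const (1 - x) * fps_X + fps_const (x ^ 2) * fps_X ^ 2 + fps_const (x ^ 2 - x ^ 3) * fps_X ^ 3"
    (is "?A * ?Q = ?P")
proof (rule fps_ext)
  fix n
  define w where "w m = poly (D_poly m) x - (if m = 1 then 2 * x - 1 else 0)" for m
  have "?A = Abs_fps w" by (rule fps_ext) (simp add: w_def)
  then have "(?A * ?Q) $ n = w n - (if n < 1 then 0 else x * w (n - 1))
      - (if n < 2 then 0 else x * w (n - 2)) - (if n < 3 then 0 else (x - x ^ 2) * w (n - 3))"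
    by (simp only: fps_times_cubic_nth) simp
  also have "\<dots> = (if n = 0 then 1 else if n = 1 then 1 - x else if n = 2 then x ^ 2
      else if n = 3 then x ^ 2 - x ^ 3 else 0)"
  proof -
    consider "n = 0" | "n = 1" | "n = 2" | "n = 3" | "n = 4" | "5 \<le> n" by linarith
    then show ?thesis
    proof cases
      case 6
      then have "n - 1 \<noteq> 1" "n - 2 \<noteq> 1" "n - 3 \<noteq> 1" by auto
      with 6 show ?thesis using poly_D_poly_recurrence[OF 6, of x] by (simp add: w_def)
    qed (simp_all add: w_def poly_D_poly_0 poly_D_poly_1[unfolded One_nat_def] poly_D_poly_2
        poly_D_poly_3 poly_D_poly_4 algebra_simps power2_eq_square power3_eq_cube)
  qed
  also have "\<dots> = ?P $ n" by simp
  finally show "(?A * ?Q) $ n = ?P $ n" .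
qed

theorem mainTheorem18:
  fixes x :: real
  shows "Abs_fps (\<lambda>n. poly (D_poly n) x) =
    ((1 - fps_const x * fps_X + fps_X) * (1 + fps_const (x^2) * fps_X^2)) /
    ((1 - fps_const x * fps_X) * (1 - fps_const x * fps_X^2) - fps_const x * fps_X^3)
    + fps_const (2*x - 1) * fps_X"
proof (rule fps_eq_divide_add)
  let ?c = "fps_const x"
  have cubic_coeff: "fps_const (x - x ^ 2) = ?c - ?c * ?c" by (simp add: power2_eq_square)
  have denominator: "(1 - ?c * fps_X) * (1 - ?c * fps_X ^ 2) - ?c * fps_X ^ 3 =
      1 - ?c * fps_X - ?c * fps_X ^ 2 - fps_const (x - x ^ 2) * fps_X ^ 3"
    unfolding cubic_coeff by (simp add: algebra_simps power2_eq_square power3_eq_cube)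
  have numerator_coeffs: "fps_const (1 - x) = 1 - ?c"
    "fps_const (x ^ 2 - x ^ 3) = fps_const (x ^ 2) - fps_const (x ^ 2) * ?c"
    by (simp_all add: power2_eq_square power3_eq_cube)
  have numerator: "(1 - ?c * fps_X + fps_X) * (1 + fps_const (x ^ 2) * fps_X ^ 2) =
      1 + fps_const (1 - x) * fps_X + fps_const (x ^ 2) * fps_X ^ 2
        + fps_const (x ^ 2 - x ^ 3) * fps_X ^ 3"
    unfolding numerator_coeffs by (simp add: algebra_simps power2_eq_square power3_eq_cube)
  show "(Abs_fps (\<lambda>n. poly (D_poly n) x) - fps_const (2 * x - 1) * fps_X) *
      ((1 - ?c * fps_X) * (1 - ?c * fps_X ^ 2) - ?c * fps_X ^ 3) =
    (1 - ?c * fps_X + fps_X) * (1 + fps_const (x ^ 2) * fps_X ^ 2)"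
    unfolding denominator numerator by (rule D_fps_times_denominator)
qed simp

end
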